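(* Let $n\ge 2$ and let $G\in\mathcal{G}_{2n}$ with $F(G)=n-1$. Then: (i) $G$ has no fixed double bond, i.e. $G-e$ has a perfect matching for every edge $e$ of $G$; (ii) the connectivity satisfies $\kappa(G)\geq n$. Moreover, if $G$ is minimal, then $G$ is $n$-regular and $\kappa(G)=\lambda(G)=n$, where $\lambda(G)$ is the edge connectivity.
   Context: All graphs are finite and simple. $\mathcal{G}_{2n}$ denotes the set of all graphs with $2n$ vertices that have a perfect matching. For a perfect matching $M$ of $G$, a forcing set of $M$ is a subset $S\subseteq M$ contained in no other perfect matching of $G$; $f(G,M)$ is the minimum size of a forcing set of $M$, and $F(G)$ is the maximum of $f(G,M)$ over all perfect matchings $M$ of $G$. A fixed double bond is an edge contained in every perfect matching. A graph $G\in\mathcal{G}_{2n}$ with $F(G)=n-1$ is called minimal if $F(G-e)\leq n-2$ for each edge $e$ of $G$. *)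

theory Defs
  imports Main
begin

definition simple_graph :: "'a set \<Rightarrow> 'a set set \<Rightarrow> bool" where
  "simple_graph V E \<longleftrightarrow> finite V \<and>
     (\<forall>e\<in>E. \<exists>u v. u \<noteq> v \<and> u \<in> V \<and> v \<in> V \<and> e = {u, v})"

definition perfect_matching :: "'a set \<Rightarrow> 'a set set \<Rightarrow> 'a set set \<Rightarrow> bool" where
  "perfect_matching V E M \<longleftrightarrow> M \<subseteq> E \<and> (\<forall>v\<in>V. \<exists>!e. e \<in> M \<and> v \<in> e)"

definition forcing_set :: "'a set \<Rightarrow> 'a set set \<Rightarrow> 'a set set \<Rightarrow> 'a set set \<Rightarrow> bool" where
  "forcing_set V E M S \<longleftrightarrow> S \<subseteq> M \<and>
     (\<forall>M'. perfect_matching V E M' \<and> S \<subseteq> M' \<longrightarrow> M' = M)"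

definition forcing_number :: "'a set \<Rightarrow> 'a set set \<Rightarrow> 'a set set \<Rightarrow> nat" where
  "forcing_number V E M = Min {card S | S. forcing_set V E M S}"

definition max_forcing_number :: "'a set \<Rightarrow> 'a set set \<Rightarrow> nat" where
  "max_forcing_number V E = Max {forcing_number V E M | M. perfect_matching V E M}"

definition fixed_double_bond :: "'a set \<Rightarrow> 'a set set \<Rightarrow> 'a set \<Rightarrow> bool" where
  "fixed_double_bond V E e \<longleftrightarrow> e \<in> E \<and> (\<forall>M. perfect_matching V E M \<longrightarrow> e \<in> M)"

definition connected_graph :: "'a set \<Rightarrow> 'a set set \<Rightarrow> bool" where
  "connected_graph V E \<longleftrightarrow>
     (\<forall>u\<in>V. \<forall>v\<in>V. (u, v) \<in> {(x, y). {x, y} \<in> E}\<^sup>*)"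

definition del_vertices_edges :: "'a set set \<Rightarrow> 'a set \<Rightarrow> 'a set set" where
  "del_vertices_edges E S = {e \<in> E. e \<inter> S = {}}"

definition vertex_connectivity :: "'a set \<Rightarrow> 'a set set \<Rightarrow> nat" where
  "vertex_connectivity V E = Min {card S | S. S \<subseteq> V \<and>
      (card (V - S) \<le> 1 \<or> \<not> connected_graph (V - S) (del_vertices_edges E S))}"

definition edge_connectivity :: "'a set \<Rightarrow> 'a set set \<Rightarrow> nat" where
  "edge_connectivity V E = Min {card D | D. D \<subseteq> E \<and> \<not> connected_graph V (E - D)}"

definition degree :: "'a set set \<Rightarrow> 'a \<Rightarrow> nat" where
  "degree E v = card {e \<in> E. v \<in> e}"

definition regular :: "'a set \<Rightarrow> 'a set set \<Rightarrow> nat \<Rightarrow> bool" where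
  "regular V E k \<longleftrightarrow> (\<forall>v\<in>V. degree E v = k)"

definition minimal_graph :: "'a set \<Rightarrow> 'a set set \<Rightarrow> bool" where
  "minimal_graph V E \<longleftrightarrow> max_forcing_number V E = card V div 2 - 1 \<and>
     (\<forall>e\<in>E. max_forcing_number V (E - {e}) \<le> card V div 2 - 2)"

end

theory Submission
  imports Defs
begin

text \<open>
  Call two edges \<open>g = {a, b}\<close>, \<open>h = {c, d}\<close> of a perfect matching \<open>M\<close> alternating if
  \<open>ac\<close> and \<open>bd\<close> are edges, so that \<open>g, h\<close> can be switched for \<open>ac, bd\<close>. A subset of
  \<open>M\<close> missing two alternating edges does not force \<open>M\<close>; conversely, if \<open>M - {g, h}\<close>
  does not force \<open>M\<close>, another perfect matching re-matches the four ends of \<open>g, h\<close> among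
  themselves, so \<open>g, h\<close> are alternating. Hence \<open>f(G, M) = |M| - 1\<close> exactly when all
  pairs of edges of \<open>M\<close> are alternating, and \<open>F(G) = n - 1\<close> yields such an \<open>M\<close>.
  Switching removes any given edge from a perfect matching, so there is no fixed double
  bond. Every vertex is adjacent to each edge of \<open>M\<close> not containing it, so after deleting
  fewer than \<open>n\<close> vertices some edge of \<open>M\<close> survives and all remaining vertices are
  attached to it.

  In a minimal graph a vertex is adjacent to exactly one end of every other edge of
  \<open>M\<close>: a second edge could be deleted without destroying any alternating pair. This
  gives degree \<open>n\<close> everywhere, hence \<open>\<kappa> \<le> n\<close> and \<open>\<lambda> \<le> n\<close>. For \<open>\<lambda> \<ge> n\<close>, fix
  \<open>y\<close> inside and \<open>z\<close> outside a component \<open>C\<close> of \<open>G - D\<close>; mapping each edge of \<open>M\<close>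
  to itself if it crosses \<open>C\<close>, and otherwise to an edge joining it to \<open>z\<close> or \<open>y\<close>, is
  injective into \<open>D\<close> once \<open>y, z\<close> are chosen so that \<open>yz\<close> is not such an edge.
\<close>

definition alternating_pair :: "'a set set \<Rightarrow> 'a set \<Rightarrow> 'a set \<Rightarrow> bool" where
  "alternating_pair E g h \<longleftrightarrow>
     (\<exists>a b c d. g = {a, b} \<and> h = {c, d} \<and> {a, c} \<in> E \<and> {b, d} \<in> E)"

definition pairwise_alternating :: "'a set set \<Rightarrow> 'a set set \<Rightarrow> bool" where
  "pairwise_alternating E M \<longleftrightarrow> (\<forall>g\<in>M. \<forall>h\<in>M. g \<noteq> h \<longrightarrow> alternating_pair E g h)"

definition neighbours :: "'a set set \<Rightarrow> 'a \<Rightarrow> 'a set" where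
  "neighbours E v = {w. {v, w} \<in> E}"

lemma two_elementsE:
  assumes "2 \<le> card A"
  obtains x y where "x \<in> A" "y \<in> A" "x \<noteq> y"
proof -
  have "finite A"
    using assms by (rule card_ge_0_finite[OF less_le_trans[OF zero_less_numeral]])
  then have "\<not> (\<forall>x\<in>A. \<forall>y\<in>A. x = y)"
    using assms by (simp flip: card_le_Suc0_iff_eq)
  then show ?thesis
    using that by blast
qed

lemma alternating_pair_sym:
  assumes "alternating_pair E g h"
  shows "alternating_pair E h g"
proof -
  obtain a b c d where "g = {a, b}" "h = {c, d}" "{a, c} \<in> E" "{b, d} \<in> E"
    using assms unfolding alternating_pair_def by blast
  moreover have "{c, a} = {a, c}" "{d, b} = {b, d}"
    by (fact insert_commute)+
  ultimately show ?thesis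
    unfolding alternating_pair_def by metis
qed

lemma alternating_pairE:
  assumes "alternating_pair E g h" and "v \<in> g"
  obtains v' c c' where "g = {v, v'}" "h = {c, c'}" "{v, c} \<in> E" "{v', c'} \<in> E"
proof -
  obtain a b c d where abcd: "g = {a, b}" "h = {c, d}" "{a, c} \<in> E" "{b, d} \<in> E"
    using assms(1) unfolding alternating_pair_def by blast
  then consider "v = a" | "v = b"
    using assms(2) by blast
  then show ?thesis
  proof cases
    case 1
    then show ?thesis
      using that abcd by blast
  next
    case 2
    then show ?thesis
      using that[of a d c] abcd by (simp add: insert_commute)
  qed
qed

lemma alternating_pair_Diff:
  assumes "alternating_pair E g h" and "\<not> e \<subseteq> g \<union> h"
  shows "alternating_pair (E - {e}) g h"
  using assms unfolding alternating_pair_def by blast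

lemma connected_graph_if_reaches:
  assumes "\<And>u. u \<in> V \<Longrightarrow> (u, r) \<in> {(x, y). {x, y} \<in> E}\<^sup>*"
  shows "connected_graph V E"
proof -
  have "sym {(x, y). {x, y} \<in> E}"
    by (auto simp: sym_def insert_commute)
  then have "sym ({(x, y). {x, y} \<in> E}\<^sup>*)"
    by (rule sym_rtrancl)
  then have "(r, v) \<in> {(x, y). {x, y} \<in> E}\<^sup>*" if "v \<in> V" for v
    using assms that by (meson symD)
  then show ?thesis
    unfolding connected_graph_def using assms by (meson rtrancl_trans)
qed

lemma not_connected_if_isolated:
  assumes "v \<in> V" "w \<in> V" "v \<noteq> w" and "\<And>y. {v, y} \<notin> E"
  shows "\<not> connected_graph V E"
proof
  assume "connected_graph V E"
  then have "(v, w) \<in> {(x, y). {x, y} \<in> E}\<^sup>*"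
    using assms unfolding connected_graph_def by blast
  then obtain y where "(v, y) \<in> {(x, y). {x, y} \<in> E}"
    using \<open>v \<noteq> w\<close> by (metis converse_rtranclE)
  then show False
    using assms(4) by blast
qed

lemma isolating_edge_cut:
  assumes "v \<in> V" "w \<in> V" "v \<noteq> w"
  shows "\<not> connected_graph V (E - {e \<in> E. v \<in> e})"
  using assms by (intro not_connected_if_isolated[of v _ w]) auto

lemma disconnected_cutE:
  assumes "\<not> connected_graph V (E - D)"
  obtains C u w where "C \<subseteq> V" "u \<in> C" "w \<in> V - C"
    and "\<And>x x'. {x, x'} \<in> E \<Longrightarrow> x \<in> C \<Longrightarrow> x' \<in> V - C \<Longrightarrow> {x, x'} \<in> D"
proof -
  let ?R = "{(x, y). {x, y} \<in> E - D}"
  obtain u w where uw: "u \<in> V" "w \<in> V" "(u, w) \<notin> ?R\<^sup>*"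
    using assms unfolding connected_graph_def by blast
  define C where "C = {x \<in> V. (u, x) \<in> ?R\<^sup>*}"
  have "{x, x'} \<in> D" if x: "{x, x'} \<in> E" "x \<in> C" "x' \<in> V - C" for x x'
  proof (rule ccontr)
    assume "{x, x'} \<notin> D"
    have "(u, x) \<in> ?R\<^sup>*"
      using x(2) unfolding C_def by blast
    moreover have "(x, x') \<in> ?R"
      using x(1) \<open>{x, x'} \<notin> D\<close> by blast
    ultimately have "(u, x') \<in> ?R\<^sup>*"
      by (rule rtrancl_into_rtrancl)
    then show False
      using x(3) unfolding C_def by blast
  qed
  moreover have "C \<subseteq> V" "u \<in> C" "w \<in> V - C"
    unfolding C_def using uw by auto
  ultimately show ?thesis
    using that by blast
qed

lemma perfect_matchingI:
  assumes "M \<subseteq> E" and "\<And>v. v \<in> V \<Longrightarrow> \<exists>h\<in>M. v \<in> h"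
    and "\<And>g h v. g \<in> M \<Longrightarrow> h \<in> M \<Longrightarrow> v \<in> g \<Longrightarrow> v \<in> h \<Longrightarrow> g = h"
  shows "perfect_matching V E M"
  unfolding perfect_matching_def
proof (intro conjI ballI)
  fix v
  assume "v \<in> V"
  then obtain h where "h \<in> M" "v \<in> h"
    using assms(2) by blast
  then show "\<exists>!h. h \<in> M \<and> v \<in> h"
    using assms(3) by (intro ex1I[of _ h]) auto
qed (fact assms(1))

lemma hub_edges_distinct:
  assumes yz: "y \<in> C" "z \<notin> C"
    and no_shortcut:
      "\<And>g g'. g \<in> M \<Longrightarrow> g' \<in> M \<Longrightarrow> y \<in> g \<Longrightarrow> z \<in> g' \<Longrightarrow> g \<subseteq> C \<Longrightarrow> g' \<subseteq> V - C \<Longrightarrow> {y, z} \<notin> E"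
    and g: "g \<in> M" "g \<subseteq> C \<or> g \<subseteq> V - C" "s \<in> g" "{t, s} \<in> E"
    and g': "g' \<in> M" "g' \<subseteq> C \<or> g' \<subseteq> V - C" "s' \<in> g'"
    and hubs: "t = (if g \<subseteq> C then z else y)" "t' = (if g' \<subseteq> C then z else y)"
    and "g \<inter> g' = {}"
  shows "{t, s} \<noteq> {t', s'}"
proof
  assume eq: "{t, s} = {t', s'}"
  have "s \<noteq> s'"
    using g(3) g'(3) \<open>g \<inter> g' = {}\<close> by blast
  with eq have cross: "s = t'" "t = s'"
    by (auto simp: doubleton_eq_iff)
  show False
  proof (cases "g \<subseteq> C")
    case True
    then have "z \<in> g'"
      using cross g'(3) hubs(1) by simp
    then have "g' \<subseteq> V - C" "\<not> g' \<subseteq> C"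
      using yz(2) g'(2) by auto
    then have "y \<in> g"
      using cross g(3) hubs(2) by simp
    moreover have "{y, z} \<in> E"
      using g(4) cross hubs \<open>\<not> g' \<subseteq> C\<close> True by (simp add: insert_commute)
    ultimately show False
      using no_shortcut[OF g(1) g'(1) _ \<open>z \<in> g'\<close> True \<open>g' \<subseteq> V - C\<close>] by blast
  next
    case False
    then have "y \<in> g'"
      using cross g'(3) hubs(1) by simp
    then have "g' \<subseteq> C"
      using yz(1) g'(2) by blast
    then have "z \<in> g"
      using cross g(3) hubs(2) by simp
    moreover have "g \<subseteq> V - C"
      using False g(2) by blast
    moreover have "{y, z} \<in> E"
      using g(4) cross hubs \<open>g' \<subseteq> C\<close> False by simp
    ultimately show False
      using no_shortcut[OF g'(1) g(1) \<open>y \<in> g'\<close> _ \<open>g' \<subseteq> C\<close>] by blast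
  qed
qed

lemma simple_graph_Diff: "simple_graph V E \<Longrightarrow> simple_graph V (E - D)"
  unfolding simple_graph_def by blast

context
  fixes V :: "'a set" and E :: "'a set set"
  assumes graph: "simple_graph V E"
begin

lemma finite_vertices: "finite V"
  using graph by (simp add: simple_graph_def)

lemma edgeE:
  assumes "e \<in> E"
  obtains u v where "u \<noteq> v" "u \<in> V" "v \<in> V" "e = {u, v}"
  using graph assms unfolding simple_graph_def by blast

lemma edge_subset: "e \<in> E \<Longrightarrow> e \<subseteq> V"
  by (erule edgeE) auto

lemma finite_edges: "finite E"
proof -
  have "E \<subseteq> Pow V"
    using edge_subset by blast
  then show ?thesis
    using finite_vertices by (meson finite_Pow_iff finite_subset)
qed

lemma singleton_notin_edges: "{v} \<notin> E"
proof
  assume "{v} \<in> E"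
  then obtain a b where "a \<noteq> b" "{v} = {a, b}"
    by (rule edgeE)
  then show False
    by auto
qed

lemma neighbours_subset: "neighbours E v \<subseteq> V"
  unfolding neighbours_def using edge_subset by blast

lemma not_in_neighbours: "v \<notin> neighbours E v"
  unfolding neighbours_def using singleton_notin_edges by simp

lemma degree_eq_card_neighbours: "degree E v = card (neighbours E v)"
proof -
  have "inj_on (\<lambda>w. {v, w}) (neighbours E v)"
  proof (rule inj_onI)
    fix w w'
    assume "w \<in> neighbours E v" "{v, w} = {v, w'}"
    then show "w = w'"
      using not_in_neighbours by (auto simp: doubleton_eq_iff)
  qed
  moreover have "(\<lambda>w. {v, w}) ` neighbours E v = {e \<in> E. v \<in> e}"
  proof
    show "(\<lambda>w. {v, w}) ` neighbours E v \<subseteq> {e \<in> E. v \<in> e}"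
      unfolding neighbours_def by blast
    show "{e \<in> E. v \<in> e} \<subseteq> (\<lambda>w. {v, w}) ` neighbours E v"
    proof
      fix e
      assume e: "e \<in> {e \<in> E. v \<in> e}"
      then obtain x y where "e = {x, y}"
        using edgeE by blast
      then obtain w where "e = {v, w}"
        using e by (auto simp: insert_commute)
      then show "e \<in> (\<lambda>w. {v, w}) ` neighbours E v"
        using e unfolding neighbours_def by blast
    qed
  qed
  ultimately show ?thesis
    unfolding degree_def by (metis card_image)
qed

lemma finite_vertex_cut_cards:
  "finite {card S | S. S \<subseteq> V \<and>
     (card (V - S) \<le> 1 \<or> \<not> connected_graph (V - S) (del_vertices_edges E S))}"
  using finite_vertices
  by (rule finite_subset[rotated, OF finite_imageI[OF finite_Pow_iff[THEN iffD2]]]) blast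

lemma le_vertex_connectivity_iff:
  "k \<le> vertex_connectivity V E \<longleftrightarrow> (\<forall>S \<subseteq> V.
     card (V - S) \<le> 1 \<or> \<not> connected_graph (V - S) (del_vertices_edges E S) \<longrightarrow> k \<le> card S)"
proof -
  have "card V \<in> {card S | S. S \<subseteq> V \<and>
     (card (V - S) \<le> 1 \<or> \<not> connected_graph (V - S) (del_vertices_edges E S))}"
    by auto
  then show ?thesis
    unfolding vertex_connectivity_def using finite_vertex_cut_cards
    by (subst Min_ge_iff) blast+
qed

lemma vertex_connectivity_le:
  assumes "S \<subseteq> V" "card (V - S) \<le> 1 \<or> \<not> connected_graph (V - S) (del_vertices_edges E S)"
  shows "vertex_connectivity V E \<le> card S"
  unfolding vertex_connectivity_def using finite_vertex_cut_cards assms by (blast intro: Min_le)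

lemma vertex_connectivity_le_degree:
  assumes "v \<in> V" and "degree E v + 2 \<le> card V"
  shows "vertex_connectivity V E \<le> degree E v"
proof -
  let ?N = "neighbours E v"
  have "finite ?N"
    using finite_subset[OF neighbours_subset finite_vertices] .
  then have "2 \<le> card (V - ?N)"
    using assms neighbours_subset by (simp add: card_Diff_subset degree_eq_card_neighbours)
  then obtain w where "w \<in> V - ?N" "w \<noteq> v"
    by (metis two_elementsE)
  then have "\<not> connected_graph (V - ?N) (del_vertices_edges E ?N)"
    using assms(1) not_in_neighbours
    by (intro not_connected_if_isolated[of v _ w]) (auto simp: del_vertices_edges_def neighbours_def)
  then show ?thesis
    using vertex_connectivity_le neighbours_subset by (simp add: degree_eq_card_neighbours)
qed

lemma finite_edge_cut_cards: "finite {card D | D. D \<subseteq> E \<and> \<not> connected_graph V (E - D)}"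
  using finite_edges
  by (rule finite_subset[rotated, OF finite_imageI[OF finite_Pow_iff[THEN iffD2]]]) blast

lemma edge_connectivity_le:
  "D \<subseteq> E \<Longrightarrow> \<not> connected_graph V (E - D) \<Longrightarrow> edge_connectivity V E \<le> card D"
  unfolding edge_connectivity_def using finite_edge_cut_cards by (blast intro: Min_le)

lemma le_edge_connectivity:
  assumes "D\<^sub>0 \<subseteq> E" "\<not> connected_graph V (E - D\<^sub>0)"
    and "\<And>D. D \<subseteq> E \<Longrightarrow> \<not> connected_graph V (E - D) \<Longrightarrow> k \<le> card D"
  shows "k \<le> edge_connectivity V E"
  unfolding edge_connectivity_def using finite_edge_cut_cards assms
  by (subst Min_ge_iff) blast+

lemma edge_connectivity_le_degree:
  assumes "v \<in> V" "w \<in> V" "v \<noteq> w"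
  shows "edge_connectivity V E \<le> degree E v"
  unfolding degree_def by (rule edge_connectivity_le[OF _ isolating_edge_cut[OF assms]]) blast

context
  fixes M :: "'a set set"
  assumes matching: "perfect_matching V E M"
begin

lemma matching_subset: "M \<subseteq> E"
  using matching by (simp add: perfect_matching_def)

lemma matching_covers:
  assumes "v \<in> V"
  obtains h where "h \<in> M" "v \<in> h"
  using matching assms unfolding perfect_matching_def by blast

lemma matching_unique: "g \<in> M \<Longrightarrow> h \<in> M \<Longrightarrow> x \<in> g \<Longrightarrow> x \<in> h \<Longrightarrow> g = h"
  using matching edge_subset matching_subset unfolding perfect_matching_def by blast

lemma matching_edgeE:
  assumes "h \<in> M"
  obtains u v where "u \<noteq> v" "u \<in> V" "v \<in> V" "h = {u, v}"
  using edgeE assms matching_subset by blast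

lemma matching_edgeE_at:
  assumes "h \<in> M" "v \<in> h"
  obtains v' where "v' \<noteq> v" "h = {v, v'}"
proof -
  obtain a b where ab: "a \<noteq> b" "h = {a, b}"
    using matching_edgeE[OF assms(1)] by metis
  from assms(2) ab(2) consider "v = a" | "v = b"
    by blast
  then show ?thesis
  proof cases
    case 1
    show ?thesis
      by (rule that[of b]) (use 1 ab in simp_all)
  next
    case 2
    show ?thesis
      by (rule that[of a]) (use 2 ab in \<open>simp_all add: insert_commute\<close>)
  qed
qed

lemma finite_matching: "finite M"
  using finite_edges matching_subset finite_subset by blast

lemma Union_matching: "\<Union>M = V"
proof
  show "\<Union>M \<subseteq> V"
    using matching_subset edge_subset by blast
  show "V \<subseteq> \<Union>M"
  proof
    fix v
    assume "v \<in> V"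
    then obtain h where "h \<in> M" "v \<in> h"
      by (rule matching_covers)
    then show "v \<in> \<Union>M"
      by blast
  qed
qed

lemma card_matching_edge: "h \<in> M \<Longrightarrow> card h = 2"
  by (erule matching_edgeE) simp

lemma card_vertices: "card V = 2 * card M"
proof -
  have "2 * card M = card (\<Union>M)"
    using card_matching_edge finite_matching finite_vertices Union_matching matching_unique
    by (intro card_partition) blast+
  then show ?thesis
    by (simp add: Union_matching)
qed

lemma perfect_matching_Diff: "e \<notin> M \<Longrightarrow> perfect_matching V (E - {e}) M"
  using matching by (auto simp: perfect_matching_def)

lemma matching_edges_disjoint: "g \<in> M \<Longrightarrow> h \<in> M \<Longrightarrow> g \<noteq> h \<Longrightarrow> g \<inter> h = {}"
  using matching_unique by blast

lemma matching_edge_disjoint_from: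
  assumes "S \<subseteq> V" "card S < card M"
  obtains h where "h \<in> M" "h \<inter> S = {}"
proof (rule ccontr)
  assume "\<not> thesis"
  then have "\<forall>h\<in>M. \<exists>x. x \<in> h \<inter> S"
    using that by blast
  then obtain f where f: "\<And>h. h \<in> M \<Longrightarrow> f h \<in> h \<inter> S"
    by metis
  have "inj_on f M"
  proof (rule inj_onI)
    fix g h
    assume "g \<in> M" "h \<in> M" "f g = f h"
    then show "g = h"
      using f matching_unique by (metis IntD1)
  qed
  moreover have "finite S"
    using finite_subset[OF assms(1) finite_vertices] .
  ultimately have "card M \<le> card S"
    using f by (intro card_inj_on_le) auto
  then show False
    using assms(2) by simp
qed

lemma matching_edge_across_cut:
  assumes "g \<in> M" "\<not> g \<subseteq> C" "\<not> g \<subseteq> V - C"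
    and crossing: "\<And>x x'. {x, x'} \<in> E \<Longrightarrow> x \<in> C \<Longrightarrow> x' \<in> V - C \<Longrightarrow> {x, x'} \<in> D"
  shows "g \<in> D"
proof -
  obtain a b where ab: "g = {a, b}"
    using matching_edgeE[OF assms(1)] by metis
  have "g \<in> E" "g \<subseteq> V"
    using assms(1) matching_subset edge_subset by blast+
  with assms(2,3) ab have "{a, b} \<in> D \<or> {b, a} \<in> D"
    using crossing[of a b] crossing[of b a] by (auto simp: insert_commute)
  then show ?thesis
    using ab by (auto simp: insert_commute)
qed

lemma cut_map_inj:
  assumes "y \<in> C" "z \<notin> C"
    and no_shortcut:
      "\<And>g g'. g \<in> M \<Longrightarrow> g' \<in> M \<Longrightarrow> y \<in> g \<Longrightarrow> z \<in> g' \<Longrightarrow> g \<subseteq> C \<Longrightarrow> g' \<subseteq> V - C \<Longrightarrow> {y, z} \<notin> E"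
    and spoke: "\<And>g. g \<in> M \<Longrightarrow> g \<subseteq> C \<or> g \<subseteq> V - C \<Longrightarrow>
      spoke g \<in> g \<and> {if g \<subseteq> C then z else y, spoke g} \<in> E"
  shows "inj_on (\<lambda>g. if g \<subseteq> C \<or> g \<subseteq> V - C then {if g \<subseteq> C then z else y, spoke g} else g) M"
    (is "inj_on ?\<psi> M")
proof (rule inj_onI, rule ccontr)
  fix g g'
  assume g: "g \<in> M" and g': "g' \<in> M" and eq: "?\<psi> g = ?\<psi> g'" and "g \<noteq> g'"
  have disjoint: "g \<inter> g' = {}"
    using matching_edges_disjoint[OF g g' \<open>g \<noteq> g'\<close>] .
  have meets: "?\<psi> h \<inter> h \<noteq> {}" if h: "h \<in> M" for h
    using spoke[OF h] card_matching_edge[OF h] by auto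
  show False
  proof (cases "(g \<subseteq> C \<or> g \<subseteq> V - C) \<and> (g' \<subseteq> C \<or> g' \<subseteq> V - C)")
    case True
    then have sides: "g \<subseteq> C \<or> g \<subseteq> V - C" "g' \<subseteq> C \<or> g' \<subseteq> V - C"
      by simp_all
    have "{if g \<subseteq> C then z else y, spoke g} \<noteq> {if g' \<subseteq> C then z else y, spoke g'}"
      by (rule hub_edges_distinct[where V = V and M = M and E = E,
            OF assms(1,2) no_shortcut g sides(1) _ _ g' sides(2) _ refl refl disjoint])
        (use spoke[OF g sides(1)] spoke[OF g' sides(2)] in simp_all)
    then show False
      using eq True by simp
  next
    case False
    then have "?\<psi> g = g \<or> ?\<psi> g' = g'"
      by auto
    then show False
      using eq meets[OF g] meets[OF g'] disjoint by auto
  qed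
qed

lemma switch_alternating:
  assumes "e \<in> M" "g \<in> M" "e \<noteq> g" and "e = {a, b}" "g = {c, d}"
    and "{a, c} \<in> E" "{b, d} \<in> E"
  shows "perfect_matching V E (M - {e, g} \<union> {{a, c}, {b, d}})"
    and "e \<notin> M - {e, g} \<union> {{a, c}, {b, d}}"
proof -
  let ?M' = "M - {e, g} \<union> {{a, c}, {b, d}}"
  have "a \<noteq> b" "c \<noteq> d"
    using card_matching_edge[OF assms(1)] card_matching_edge[OF assms(2)] assms(4,5) by auto
  moreover have "{a, b} \<inter> {c, d} = {}"
    using matching_edges_disjoint assms(1-5) by simp
  ultimately have distinct: "a \<noteq> b" "c \<noteq> d" "a \<noteq> c" "a \<noteq> d" "b \<noteq> c" "b \<noteq> d"
    by auto
  have outside: "f \<inter> {a, b, c, d} = {}" if "f \<in> M - {e, g}" for f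
    using matching_edges_disjoint[of f e] matching_edges_disjoint[of f g] that assms(1,2,4,5) by auto
  show "perfect_matching V E ?M'"
  proof (rule perfect_matchingI)
    show "?M' \<subseteq> E"
      using matching_subset assms(6,7) by blast
    show "\<exists>h\<in>?M'. v \<in> h" if v: "v \<in> V" for v
    proof (cases "v \<in> {a, b, c, d}")
      case True
      then show ?thesis
        by blast
    next
      case False
      obtain h where "h \<in> M" "v \<in> h"
        using matching_covers[OF v] by metis
      then show ?thesis
        using False assms(4,5) by blast
    qed
    show "f\<^sub>1 = f\<^sub>2" if in\<^sub>1: "f\<^sub>1 \<in> ?M'" and in\<^sub>2: "f\<^sub>2 \<in> ?M'" and x: "x \<in> f\<^sub>1" "x \<in> f\<^sub>2" for f\<^sub>1 f\<^sub>2 x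
    proof (cases "x \<in> {a, b, c, d}")
      case True
      then have "f\<^sub>1 \<in> {{a, c}, {b, d}}" "f\<^sub>2 \<in> {{a, c}, {b, d}}"
        using outside in\<^sub>1 in\<^sub>2 x by blast+
      then show ?thesis
        using distinct x by auto
    next
      case False
      then have "f\<^sub>1 \<in> M" "f\<^sub>2 \<in> M"
        using in\<^sub>1 in\<^sub>2 x by auto
      then show ?thesis
        using matching_unique x by blast
    qed
  qed
  show "e \<notin> ?M'"
    using assms(4) distinct by (simp add: doubleton_eq_iff)
qed

end

lemma perfect_matching_eq_if_superset:
  assumes "perfect_matching V E M" "perfect_matching V E M'" and "M \<subseteq> M'"
  shows "M' = M"
proof -
  have "f \<in> M" if f: "f \<in> M'" for f
  proof -
    obtain u v where "u \<in> V" "f = {u, v}"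
      using matching_edgeE[OF assms(2) f] by metis
    moreover obtain h where "h \<in> M" "u \<in> h"
      using matching_covers[OF assms(1) \<open>u \<in> V\<close>] by metis
    ultimately show ?thesis
      using matching_unique[OF assms(2) f] assms(3) by blast
  qed
  then show ?thesis
    using assms(3) by blast
qed

context
  fixes M :: "'a set set"
  assumes matching: "perfect_matching V E M"
begin

lemma forcing_set_self: "forcing_set V E M M"
  unfolding forcing_set_def using perfect_matching_eq_if_superset[OF matching] by blast

lemma finite_forcing_set_cards: "finite {card S | S. forcing_set V E M S}"
proof -
  have "{card S | S. forcing_set V E M S} \<subseteq> card ` Pow M"
    unfolding forcing_set_def by blast
  then show ?thesis
    using finite_matching[OF matching] by (meson finite_Pow_iff finite_imageI finite_subset)
qed

lemma forcing_number_le: "forcing_set V E M S \<Longrightarrow> forcing_number V E M \<le> card S"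
  unfolding forcing_number_def using finite_forcing_set_cards by (intro Min_le) auto

lemma le_forcing_number_iff:
  "k \<le> forcing_number V E M \<longleftrightarrow> (\<forall>S. forcing_set V E M S \<longrightarrow> k \<le> card S)"
proof -
  have "{card S | S. forcing_set V E M S} \<noteq> {}"
    using forcing_set_self by blast
  then have "k \<le> forcing_number V E M \<longleftrightarrow> (\<forall>c\<in>{card S | S. forcing_set V E M S}. k \<le> c)"
    unfolding forcing_number_def by (rule Min_ge_iff[OF finite_forcing_set_cards])
  then show ?thesis
    by blast
qed

end

lemma finite_forcing_numbers: "finite {forcing_number V E M | M. perfect_matching V E M}"
proof -
  have "{forcing_number V E M | M. perfect_matching V E M} \<subseteq> forcing_number V E ` Pow E"
    using matching_subset by blast
  then show ?thesis
    using finite_edges by (meson finite_Pow_iff finite_imageI finite_subset)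
qed

lemma forcing_number_le_max:
  "perfect_matching V E M \<Longrightarrow> forcing_number V E M \<le> max_forcing_number V E"
  unfolding max_forcing_number_def using finite_forcing_numbers by (intro Max_ge) auto

lemma max_forcing_number_attained:
  assumes "perfect_matching V E M"
  obtains M where "perfect_matching V E M" "forcing_number V E M = max_forcing_number V E"
proof -
  have "max_forcing_number V E \<in> {forcing_number V E M | M. perfect_matching V E M}"
    unfolding max_forcing_number_def using assms by (intro Max_in finite_forcing_numbers) auto
  then obtain M' where "perfect_matching V E M'" "max_forcing_number V E = forcing_number V E M'"
    by blast
  then show ?thesis
    using that by simp
qed

lemma matching_edge_confined:
  assumes matching: "perfect_matching V E M" and other: "perfect_matching V E M'"
    and eg: "e \<in> M" "g \<in> M" and kept: "M - {e, g} \<subseteq> M'"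
    and f: "f \<in> M'" "x \<in> f" "x \<in> e \<union> g"
  shows "f \<subseteq> e \<union> g"
proof
  fix y
  assume "y \<in> f"
  then have "y \<in> V"
    using f edge_subset matching_subset[OF other] by blast
  then obtain h where h: "h \<in> M" "y \<in> h"
    using matching_covers[OF matching] by metis
  show "y \<in> e \<union> g"
  proof (rule ccontr)
    assume "y \<notin> e \<union> g"
    then have "h \<noteq> e" "h \<noteq> g"
      using h by auto
    then have "f = h"
      using matching_unique[OF other f(1) _ \<open>y \<in> f\<close> h(2)] h(1) kept by blast
    then have "h \<inter> (e \<union> g) \<noteq> {}"
      using f by blast
    then show False
      using matching_edges_disjoint[OF matching] h(1) eg \<open>h \<noteq> e\<close> \<open>h \<noteq> g\<close> by blast
  qed
qed

lemma matching_partner_across: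
  assumes matching: "perfect_matching V E M" and other: "perfect_matching V E M'"
    and eg: "e \<in> M" "g \<in> M" and kept: "M - {e, g} \<subseteq> M'" and "e \<notin> M'" and x: "x \<in> e"
  obtains x' where "{x, x'} \<in> M'" "x' \<in> g"
proof -
  have "x \<in> V"
    using x eg edge_subset matching_subset[OF matching] by blast
  then obtain f where f: "f \<in> M'" "x \<in> f"
    using matching_covers[OF other] by metis
  then obtain x' where x': "x' \<noteq> x" "f = {x, x'}"
    by (rule matching_edgeE_at[OF other])
  have "x' \<notin> e"
  proof
    assume "x' \<in> e"
    moreover obtain a b where "e = {a, b}"
      using matching_edgeE[OF matching eg(1)] by metis
    ultimately have "f = e"
      using x x' by auto
    then show False
      using f(1) \<open>e \<notin> M'\<close> by blast
  qed
  moreover have "x' \<in> e \<union> g"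
    using matching_edge_confined[OF matching other eg kept f] x x' by blast
  ultimately show ?thesis
    using that f(1) x' by blast
qed

lemma alternating_pair_if_not_forced:
  assumes matching: "perfect_matching V E M" and other: "perfect_matching V E M'"
    and eg: "e \<in> M" "g \<in> M" and kept: "M - {e, g} \<subseteq> M'" and "e \<notin> M'"
  shows "alternating_pair E e g"
proof -
  note partner = matching_partner_across[OF matching other eg kept \<open>e \<notin> M'\<close>]
  obtain a b where ab: "a \<noteq> b" "e = {a, b}"
    using matching_edgeE[OF matching eg(1)] by metis
  have "a \<in> e" "b \<in> e"
    using ab by simp_all
  obtain y where y: "{a, y} \<in> M'" "y \<in> g"
    by (rule partner[OF \<open>a \<in> e\<close>])
  obtain z where z: "{b, z} \<in> M'" "z \<in> g"
    by (rule partner[OF \<open>b \<in> e\<close>])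
  have "y \<noteq> z"
  proof
    assume "y = z"
    then have "{a, y} = {b, z}"
      using matching_unique[OF other y(1) z(1)] by blast
    then show False
      using ab \<open>y = z\<close> by (auto simp: doubleton_eq_iff)
  qed
  moreover obtain c d where "g = {c, d}"
    using matching_edgeE[OF matching eg(2)] by metis
  ultimately have "g = {y, z}"
    using y z by auto
  moreover have "{a, y} \<in> E" "{b, z} \<in> E"
    using y z matching_subset[OF other] by blast+
  ultimately show ?thesis
    unfolding alternating_pair_def using ab by blast
qed

lemma forcing_set_misses_one:
  assumes matching: "perfect_matching V E M" and alternating: "pairwise_alternating E M"
    and forcing: "forcing_set V E M S" and "e \<in> M - S" "g \<in> M - S"
  shows "e = g"
proof (rule ccontr)
  assume "e \<noteq> g"
  then have "alternating_pair E e g"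
    using alternating assms(4,5) unfolding pairwise_alternating_def by blast
  then obtain a b c d where abcd: "e = {a, b}" "g = {c, d}" "{a, c} \<in> E" "{b, d} \<in> E"
    unfolding alternating_pair_def by blast
  let ?M' = "M - {e, g} \<union> {{a, c}, {b, d}}"
  have "e \<in> M" "g \<in> M"
    using assms(4,5) by simp_all
  note switched = switch_alternating[OF matching this \<open>e \<noteq> g\<close> abcd]
  have "S \<subseteq> ?M'"
    using forcing assms(4,5) unfolding forcing_set_def by blast
  then have "?M' = M"
    using forcing switched(1) unfolding forcing_set_def by blast
  then show False
    using switched(2) \<open>e \<in> M\<close> by simp
qed

lemma forcing_number_ge_if_pairwise_alternating:
  assumes matching: "perfect_matching V E M" and alternating: "pairwise_alternating E M"
  shows "card M - 1 \<le> forcing_number V E M"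
  unfolding le_forcing_number_iff[OF matching]
proof (intro allI impI)
  fix S
  assume forcing: "forcing_set V E M S"
  then have "S \<subseteq> M"
    unfolding forcing_set_def by blast
  have "\<not> 2 \<le> card (M - S)"
    using forcing_set_misses_one[OF matching alternating forcing] by (metis two_elementsE)
  moreover have "finite S"
    using finite_subset[OF \<open>S \<subseteq> M\<close> finite_matching[OF matching]] .
  ultimately show "card M - 1 \<le> card S"
    using \<open>S \<subseteq> M\<close> by (simp add: card_Diff_subset)
qed

lemma pairwise_alternating_if_forcing_number_ge:
  assumes matching: "perfect_matching V E M" and bound: "card M - 1 \<le> forcing_number V E M"
  shows "pairwise_alternating E M"
proof -
  have "alternating_pair E e g" if eg: "e \<in> M" "g \<in> M" "e \<noteq> g" for e g
  proof -
    have "card {e, g} \<le> card M"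
      using eg finite_matching[OF matching] by (intro card_mono) auto
    then have "card (M - {e, g}) < card M - 1"
      using eg by (simp add: card_Diff_subset)
    then have "\<not> forcing_set V E M (M - {e, g})"
      using bound forcing_number_le[OF matching] by fastforce
    then obtain M' where M': "perfect_matching V E M'" "M - {e, g} \<subseteq> M'" "M' \<noteq> M"
      unfolding forcing_set_def by blast
    then have "e \<notin> M' \<or> g \<notin> M'"
      using perfect_matching_eq_if_superset[OF matching M'(1)] by blast
    then show ?thesis
    proof
      assume "e \<notin> M'"
      then show ?thesis
        by (rule alternating_pair_if_not_forced[OF matching M'(1) eg(1,2) M'(2)])
    next
      assume "g \<notin> M'"
      have "M - {g, e} \<subseteq> M'"
        using M'(2) by blast
      then have "alternating_pair E g e"
        by (rule alternating_pair_if_not_forced[OF matching M'(1) eg(2,1) _ \<open>g \<notin> M'\<close>])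
      then show ?thesis
        by (rule alternating_pair_sym)
    qed
  qed
  then show ?thesis
    unfolding pairwise_alternating_def by blast
qed

lemma pairwise_alternating_matching_exists:
  assumes "\<exists>M. perfect_matching V E M" and "max_forcing_number V E = card V div 2 - 1"
  obtains M where "perfect_matching V E M" "pairwise_alternating E M"
proof -
  from assms(1) obtain M\<^sub>0 where "perfect_matching V E M\<^sub>0"
    by blast
  then obtain M where M: "perfect_matching V E M" "forcing_number V E M = max_forcing_number V E"
    by (rule max_forcing_number_attained)
  then have "card M - 1 \<le> forcing_number V E M"
    using assms(2) card_vertices[OF M(1)] by simp
  then show ?thesis
    by (rule that[OF M(1) pairwise_alternating_if_forcing_number_ge[OF M(1)]])
qed

context
  fixes M :: "'a set set"
  assumes matching: "perfect_matching V E M" and alternating: "pairwise_alternating E M"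
begin

lemma matching_avoiding_edge:
  assumes "2 \<le> card M" and "e \<in> E"
  obtains M' where "perfect_matching V E M'" "e \<notin> M'"
proof (cases "e \<in> M")
  case True
  obtain g where "g \<in> M" "g \<noteq> e"
    using assms(1) by (metis two_elementsE)
  then have "alternating_pair E e g"
    using True alternating unfolding pairwise_alternating_def by blast
  then obtain a b c d where abcd: "e = {a, b}" "g = {c, d}" "{a, c} \<in> E" "{b, d} \<in> E"
    unfolding alternating_pair_def by blast
  note switched = switch_alternating[OF matching True \<open>g \<in> M\<close> \<open>g \<noteq> e\<close>[symmetric] abcd]
  show ?thesis
    by (rule that[OF switched])
next
  case False
  show ?thesis
    by (rule that[OF matching False])
qed

lemma adjacent_to_matching_edge:
  assumes "g \<in> M" "x \<in> V" "x \<notin> g"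
  obtains y where "y \<in> g" "{x, y} \<in> E"
proof -
  obtain h where "h \<in> M" "x \<in> h"
    using matching_covers[OF matching assms(2)] by metis
  then have "alternating_pair E h g"
    using alternating assms unfolding pairwise_alternating_def by blast
  then obtain x' c c' where "h = {x, x'}" "g = {c, c'}" "{x, c} \<in> E"
    using \<open>x \<in> h\<close> by (rule alternating_pairE)
  then show ?thesis
    using that by blast
qed

lemma connected_if_matching_edge_avoids:
  assumes h: "h \<in> M" "h \<inter> S = {}"
  shows "connected_graph (V - S) (del_vertices_edges E S)"
proof -
  obtain a b where ab: "h = {a, b}"
    using matching_edgeE[OF matching h(1)] by metis
  let ?R = "{(x, y). {x, y} \<in> del_vertices_edges E S}"
  have edge: "(x, y) \<in> ?R" if "{x, y} \<in> E" "x \<notin> S" "y \<notin> S" for x y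
    using that unfolding del_vertices_edges_def by auto
  have "h \<in> E"
    using h(1) matching_subset[OF matching] by blast
  then have "(b, a) \<in> ?R"
    using edge[of b a] ab h(2) by (auto simp: insert_commute)
  then have to_a: "(y, a) \<in> ?R\<^sup>*" if "y \<in> h" for y
  proof -
    from that ab consider "y = a" | "y = b"
      by blast
    then show ?thesis
      by cases (use \<open>(b, a) \<in> ?R\<close> in auto)
  qed
  have "(u, a) \<in> ?R\<^sup>*" if u: "u \<in> V - S" for u
  proof (cases "u \<in> h")
    case True
    then show ?thesis
      by (rule to_a)
  next
    case False
    then obtain y where "y \<in> h" "{u, y} \<in> E"
      using adjacent_to_matching_edge h(1) u by blast
    then have "(u, y) \<in> ?R"
      using edge[of u y] u h(2) by blast
    then show ?thesis
      using to_a[OF \<open>y \<in> h\<close>] by (rule converse_rtrancl_into_rtrancl)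
  qed
  then show ?thesis
    by (rule connected_graph_if_reaches)
qed

lemma card_matching_le_vertex_connectivity: "card M \<le> vertex_connectivity V E"
  unfolding le_vertex_connectivity_iff
proof (intro allI impI)
  fix S
  assume "S \<subseteq> V" and cut: "card (V - S) \<le> 1 \<or> \<not> connected_graph (V - S) (del_vertices_edges E S)"
  show "card M \<le> card S"
  proof (rule ccontr)
    assume "\<not> card M \<le> card S"
    then have "card S < card M"
      by simp
    then obtain h where "h \<in> M" "h \<inter> S = {}"
      by (rule matching_edge_disjoint_from[OF matching \<open>S \<subseteq> V\<close>])
    then have "connected_graph (V - S) (del_vertices_edges E S)"
      by (rule connected_if_matching_edge_avoids)
    moreover have "finite S"
      using finite_subset[OF \<open>S \<subseteq> V\<close> finite_vertices] .
    then have "1 < card (V - S)"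
      using card_vertices[OF matching] \<open>S \<subseteq> V\<close> \<open>card S < card M\<close>
      by (simp add: card_Diff_subset)
    ultimately show False
      using cut by simp
  qed
qed

lemma pairwise_alternating_Diff_edge:
  assumes h: "h \<in> M" and g: "g \<in> M" "h \<noteq> g" and "v \<in> h" "c \<in> g"
    and kept: "alternating_pair (E - {{v, c}}) h g"
  shows "pairwise_alternating (E - {{v, c}}) M"
  unfolding pairwise_alternating_def
proof (intro ballI impI)
  fix h\<^sub>1 h\<^sub>2
  assume h\<^sub>1: "h\<^sub>1 \<in> M" and h\<^sub>2: "h\<^sub>2 \<in> M" and "h\<^sub>1 \<noteq> h\<^sub>2"
  show "alternating_pair (E - {{v, c}}) h\<^sub>1 h\<^sub>2"
  proof (cases "{h\<^sub>1, h\<^sub>2} = {h, g}")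
    case True
    then consider "h\<^sub>1 = h" "h\<^sub>2 = g" | "h\<^sub>1 = g" "h\<^sub>2 = h"
      using \<open>h\<^sub>1 \<noteq> h\<^sub>2\<close> by (auto simp: doubleton_eq_iff)
    then show ?thesis
      by cases (use kept alternating_pair_sym in simp_all)
  next
    case False
    have "\<not> {v, c} \<subseteq> h\<^sub>1 \<union> h\<^sub>2"
    proof
      assume "{v, c} \<subseteq> h\<^sub>1 \<union> h\<^sub>2"
      moreover have "h' = h" if "h' \<in> M" "v \<in> h'" for h'
        using matching_unique[OF matching that(1) h that(2) \<open>v \<in> h\<close>] .
      moreover have "h' = g" if "h' \<in> M" "c \<in> h'" for h'
        using matching_unique[OF matching that(1) g(1) that(2) \<open>c \<in> g\<close>] .
      ultimately have "h \<in> {h\<^sub>1, h\<^sub>2}" "g \<in> {h\<^sub>1, h\<^sub>2}"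
        using h\<^sub>1 h\<^sub>2 by blast+
      then show False
        using False g(2) by auto
    qed
    moreover have "alternating_pair E h\<^sub>1 h\<^sub>2"
      using alternating h\<^sub>1 h\<^sub>2 \<open>h\<^sub>1 \<noteq> h\<^sub>2\<close> unfolding pairwise_alternating_def by blast
    ultimately show ?thesis
      by (intro alternating_pair_Diff)
  qed
qed

lemma card_matching_le_cut:
  assumes "C \<subseteq> V" "y \<in> C" "z \<in> V - C" "finite D"
    and crossing: "\<And>x x'. {x, x'} \<in> E \<Longrightarrow> x \<in> C \<Longrightarrow> x' \<in> V - C \<Longrightarrow> {x, x'} \<in> D"
    and no_shortcut:
      "\<And>g g'. g \<in> M \<Longrightarrow> g' \<in> M \<Longrightarrow> y \<in> g \<Longrightarrow> z \<in> g' \<Longrightarrow> g \<subseteq> C \<Longrightarrow> g' \<subseteq> V - C \<Longrightarrow> {y, z} \<notin> E"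
  shows "card M \<le> card D"
proof -
  define hub where "hub g = (if g \<subseteq> C then z else y)" for g
  have "\<exists>x. g \<in> M \<longrightarrow> g \<subseteq> C \<or> g \<subseteq> V - C \<longrightarrow> x \<in> g \<and> {hub g, x} \<in> E" for g
  proof (cases "g \<in> M \<and> (g \<subseteq> C \<or> g \<subseteq> V - C)")
    case True
    then have "hub g \<in> V" "hub g \<notin> g"
      using card_matching_edge[OF matching, of g] assms(1-3) unfolding hub_def by auto
    then obtain x where "x \<in> g" "{hub g, x} \<in> E"
      using adjacent_to_matching_edge True by blast
    then show ?thesis
      by blast
  qed blast
  then obtain spoke where spoke:
    "\<And>g. g \<in> M \<Longrightarrow> g \<subseteq> C \<or> g \<subseteq> V - C \<Longrightarrow> spoke g \<in> g \<and> {hub g, spoke g} \<in> E"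
    by metis
  let ?\<psi> = "\<lambda>g. if g \<subseteq> C \<or> g \<subseteq> V - C then {hub g, spoke g} else g"
  have in_cut: "?\<psi> g \<in> D" if g: "g \<in> M" for g
  proof -
    consider "g \<subseteq> C" | "\<not> g \<subseteq> C" "g \<subseteq> V - C" | "\<not> g \<subseteq> C" "\<not> g \<subseteq> V - C"
      by blast
    then show ?thesis
    proof cases
      case 1
      then have "{spoke g, z} \<in> D"
        using spoke[OF g] assms(3) unfolding hub_def by (intro crossing) (auto simp: insert_commute)
      then show ?thesis
        using 1 unfolding hub_def by (simp add: insert_commute)
    next
      case 2
      then have "{y, spoke g} \<in> D"
        using spoke[OF g] assms(2) unfolding hub_def by (intro crossing) auto
      then show ?thesis
        using 2 unfolding hub_def by simp
    next
      case 3
      then show ?thesis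
        using matching_edge_across_cut[OF matching g _ _ crossing] by simp
    qed
  qed
  have "z \<notin> C"
    using assms(3) by blast
  then have "inj_on ?\<psi> M"
    unfolding hub_def by (rule cut_map_inj[OF matching assms(2) _ no_shortcut spoke[unfolded hub_def]])
  moreover have "?\<psi> ` M \<subseteq> D"
    using in_cut by (rule image_subsetI)
  ultimately show ?thesis
    using assms(4) by (rule card_inj_on_le)
qed

end

end

context
  fixes V :: "'a set" and E :: "'a set set"
  assumes graph: "simple_graph V E"
begin

context
  fixes M :: "'a set set"
  assumes matching: "perfect_matching V E M" and minimal: "minimal_graph V E"
begin

lemma minimal_Diff_not_pairwise_alternating:
  assumes "e \<in> E" "e \<notin> M" and "2 \<le> card M"
  shows "\<not> pairwise_alternating (E - {e}) M"
proof
  assume "pairwise_alternating (E - {e}) M"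
  note smaller = simple_graph_Diff[OF graph] perfect_matching_Diff[OF graph matching \<open>e \<notin> M\<close>]
  have "card M - 1 \<le> forcing_number V (E - {e}) M"
    by (rule forcing_number_ge_if_pairwise_alternating[OF smaller \<open>pairwise_alternating (E - {e}) M\<close>])
  also have "\<dots> \<le> max_forcing_number V (E - {e})"
    by (rule forcing_number_le_max[OF smaller])
  also have "\<dots> \<le> card M - 2"
    using minimal \<open>e \<in> E\<close> card_vertices[OF graph matching] unfolding minimal_graph_def by auto
  finally show False
    using assms(3) by simp
qed

context
  assumes alternating: "pairwise_alternating E M"
begin

lemma minimal_adjacent_end_unique:
  assumes g: "g \<in> M" and v: "v \<in> V" "v \<notin> g" and "c \<in> g" "d \<in> g" "{v, c} \<in> E" "{v, d} \<in> E"
  shows "c = d"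
proof (rule ccontr)
  assume "c \<noteq> d"
  obtain h where h: "h \<in> M" "v \<in> h"
    using matching_covers[OF graph matching v(1)] by metis
  have "h \<noteq> g"
    using h(2) v(2) by blast
  then have "alternating_pair E h g"
    using alternating h(1) g unfolding pairwise_alternating_def by blast
  then obtain v' c\<^sub>0 c\<^sub>1 where cycle: "h = {v, v'}" "g = {c\<^sub>0, c\<^sub>1}" "{v, c\<^sub>0} \<in> E" "{v', c\<^sub>1} \<in> E"
    using h(2) by (rule alternating_pairE)
  have "v \<noteq> v'" "c\<^sub>0 \<noteq> c\<^sub>1"
    using card_matching_edge[OF graph matching h(1)] card_matching_edge[OF graph matching g] cycle(1,2)
    by auto
  let ?e = "{v, c\<^sub>1}"
  have "c\<^sub>1 \<in> {c, d}"
    using cycle(2) assms(4,5) \<open>c \<noteq> d\<close> by auto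
  then have "?e \<in> E"
    using assms(6,7) by auto
  have "?e \<notin> M"
  proof
    assume "?e \<in> M"
    then have "?e = h"
      using matching_unique[OF graph matching _ h(1), of ?e v] h(2) by simp
    then have "c\<^sub>1 \<in> h \<inter> g"
      using cycle(2) by auto
    then show False
      using matching_edges_disjoint[OF graph matching h(1) g \<open>h \<noteq> g\<close>] by simp
  qed
  have "{v, c\<^sub>0} \<noteq> ?e" "{v', c\<^sub>1} \<noteq> ?e"
    using \<open>v \<noteq> v'\<close> \<open>c\<^sub>0 \<noteq> c\<^sub>1\<close> v(2) cycle(2) by (auto simp: doubleton_eq_iff)
  then have cycle_kept: "alternating_pair (E - {?e}) h g"
    unfolding alternating_pair_def using cycle by blast
  have "pairwise_alternating (E - {?e}) M"
    by (rule pairwise_alternating_Diff_edge[OF graph matching alternating h(1) g \<open>h \<noteq> g\<close> h(2) _ cycle_kept])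
      (simp add: cycle(2))
  moreover have "card {h, g} \<le> card M"
    using h(1) g finite_matching[OF graph matching] by (intro card_mono) auto
  ultimately show False
    using minimal_Diff_not_pairwise_alternating \<open>?e \<in> E\<close> \<open>?e \<notin> M\<close> \<open>h \<noteq> g\<close> by simp
qed

lemma neighbours_Int_matching_edge:
  assumes h: "h \<in> M" and v: "v \<in> V"
  obtains w where "neighbours E v \<inter> h = {w}"
proof (cases "v \<in> h")
  case True
  obtain v' where v': "v' \<noteq> v" "h = {v, v'}"
    by (rule matching_edgeE_at[OF graph matching h True])
  have "h \<in> E"
    using h matching_subset[OF graph matching] by blast
  then have "neighbours E v \<inter> h = {v'}"
    using v' not_in_neighbours[OF graph, of v] unfolding neighbours_def by auto
  then show ?thesis
    by (rule that)
next
  case False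
  obtain y where y: "y \<in> h" "{v, y} \<in> E"
    by (rule adjacent_to_matching_edge[OF graph matching alternating h v False])
  have "neighbours E v \<inter> h = {y}"
    using y minimal_adjacent_end_unique[OF h v False] unfolding neighbours_def by blast
  then show ?thesis
    by (rule that)
qed

lemma card_neighbours_minimal:
  assumes "v \<in> V"
  shows "card (neighbours E v) = card M"
proof -
  have "neighbours E v = (\<Union>h\<in>M. neighbours E v \<inter> h)"
    using neighbours_subset[OF graph] Union_matching[OF graph matching] by blast
  moreover have "finite h" if "h \<in> M" for h
    using card_matching_edge[OF graph matching that] by (simp add: card_ge_0_finite)
  then have "card (\<Union>h\<in>M. neighbours E v \<inter> h) = (\<Sum>h\<in>M. card (neighbours E v \<inter> h))"
    using matching_edges_disjoint[OF graph matching] finite_matching[OF graph matching]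
    by (intro card_UN_disjoint) auto
  moreover have "card (neighbours E v \<inter> h) = 1" if h: "h \<in> M" for h
  proof -
    obtain w where "neighbours E v \<inter> h = {w}"
      by (rule neighbours_Int_matching_edge[OF h assms])
    then show ?thesis
      by simp
  qed
  ultimately show ?thesis
    by simp
qed

lemma regular_minimal: "regular V E (card M)"
  unfolding regular_def using degree_eq_card_neighbours[OF graph] card_neighbours_minimal by simp

lemma card_matching_le_disconnecting:
  assumes "D \<subseteq> E" and "\<not> connected_graph V (E - D)"
  shows "card M \<le> card D"
proof -
  obtain C u w where C: "C \<subseteq> V" "u \<in> C" "w \<in> V - C"
    and crossing: "\<And>x x'. {x, x'} \<in> E \<Longrightarrow> x \<in> C \<Longrightarrow> x' \<in> V - C \<Longrightarrow> {x, x'} \<in> D"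
    using assms(2) by (rule disconnected_cutE) (rule that)
  have uw: "u \<in> V" "w \<in> V"
    using C by auto
  have "finite D"
    using finite_subset[OF assms(1) finite_edges[OF graph]] .
  obtain g where g: "g \<in> M" "u \<in> g"
    using matching_covers[OF graph matching uw(1)] by metis
  have "g \<subseteq> V"
    using g(1) matching_subset[OF graph matching] edge_subset[OF graph] by blast
  show ?thesis
  proof (cases "g \<subseteq> C")
    case True
    then have "w \<notin> g"
      using C(3) by blast
    obtain x where x: "x \<in> g" "{w, x} \<in> E"
      by (rule adjacent_to_matching_edge[OF graph matching alternating g(1) uw(2) \<open>w \<notin> g\<close>])
    obtain x' where x': "x' \<noteq> x" "g = {x, x'}"
      by (rule matching_edgeE_at[OF graph matching g(1) x(1)])
    have "{w, x'} \<notin> E"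
      using minimal_adjacent_end_unique[OF g(1) uw(2) \<open>w \<notin> g\<close> _ x(1)] x x' by blast
    show ?thesis
      by (rule card_matching_le_cut[OF graph matching alternating C(1) _ C(3) \<open>finite D\<close> crossing, of x'])
        (use x' True \<open>{w, x'} \<notin> E\<close> in \<open>auto simp: insert_commute\<close>)
  next
    case False
    then obtain z where "z \<in> g" "z \<in> V - C"
      using \<open>g \<subseteq> V\<close> by blast
    have no_shortcut: "{u, z} \<notin> E" if "g' \<in> M" "u \<in> g'" "g' \<subseteq> C" for g'
      using matching_unique[OF graph matching that(1) g(1) that(2) g(2)] False that(3) by blast
    show ?thesis
      by (rule card_matching_le_cut[OF graph matching alternating C(1,2) \<open>z \<in> V - C\<close> \<open>finite D\<close> crossing])
        (use no_shortcut in blast)+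
  qed
qed

lemma minimal_connectivity:
  assumes "2 \<le> card M"
  shows "regular V E (card M) \<and> vertex_connectivity V E = card M \<and> edge_connectivity V E = card M"
proof -
  have "2 \<le> card V"
    using assms card_vertices[OF graph matching] by simp
  then obtain v w where vw: "v \<in> V" "w \<in> V" "v \<noteq> w"
    by (rule two_elementsE)
  have degree: "degree E v = card M"
    using regular_minimal vw(1) unfolding regular_def by blast
  have "vertex_connectivity V E \<le> card M"
    using vertex_connectivity_le_degree[OF graph vw(1)] degree assms card_vertices[OF graph matching]
    by simp
  moreover have "edge_connectivity V E \<le> card M"
    using edge_connectivity_le_degree[OF graph vw] degree by simp
  moreover have "card M \<le> edge_connectivity V E"
    using isolating_edge_cut[OF vw] card_matching_le_disconnecting
    by (intro le_edge_connectivity[OF graph, of "{e \<in> E. v \<in> e}"]) auto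
  moreover have "card M \<le> vertex_connectivity V E"
    by (rule card_matching_le_vertex_connectivity[OF graph matching alternating])
  ultimately show ?thesis
    using regular_minimal by simp
qed

end

end

end

theorem lemma2p3:
  fixes V :: "'a set" and E :: "'a set set" and n :: nat
  assumes "simple_graph V E"
    and "n \<ge> 2"
    and "card V = 2 * n"
    and "\<exists>M. perfect_matching V E M"
    and "max_forcing_number V E = n - 1"
  shows "(\<forall>e\<in>E. \<not> fixed_double_bond V E e)
       \<and> (\<forall>e\<in>E. \<exists>M. perfect_matching V (E - {e}) M)
       \<and> vertex_connectivity V E \<ge> n
       \<and> (minimal_graph V E \<longrightarrow>
            regular V E n \<and> vertex_connectivity V E = n \<and> edge_connectivity V E = n)"
proof -
  note graph = assms(1)
  have "max_forcing_number V E = card V div 2 - 1"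
    using assms(3,5) by simp
  then obtain M where matching: "perfect_matching V E M" and alternating: "pairwise_alternating E M"
    by (rule pairwise_alternating_matching_exists[OF graph assms(4)])
  have "card M = n"
    using card_vertices[OF graph matching] assms(3) by simp
  then have "2 \<le> card M"
    using assms(2) by simp
  have avoid: "\<exists>M'. perfect_matching V E M' \<and> e \<notin> M'" if "e \<in> E" for e
    by (rule matching_avoiding_edge[OF graph matching alternating \<open>2 \<le> card M\<close> that]) blast
  then have "\<forall>e\<in>E. \<not> fixed_double_bond V E e"
    unfolding fixed_double_bond_def by blast
  moreover have "\<forall>e\<in>E. \<exists>M. perfect_matching V (E - {e}) M"
    using avoid perfect_matching_Diff[OF graph] by blast
  moreover have "vertex_connectivity V E \<ge> n"
    using card_matching_le_vertex_connectivity[OF graph matching alternating] \<open>card M = n\<close> by simp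
  moreover have "minimal_graph V E \<longrightarrow>
      regular V E n \<and> vertex_connectivity V E = n \<and> edge_connectivity V E = n"
    using minimal_connectivity[OF graph matching _ alternating \<open>2 \<le> card M\<close>] \<open>card M = n\<close> by simp
  ultimately show ?thesis
    by blast
qed

end
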